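(* Let $|T|$ denote the number of internal vertices of a free marked triangulation $(T,v)$ of an $(m+2)$-gon, distributed according to $\tilde\mu_m$. As $m\to\infty$, the law of $m^{-2}|T|$ converges to the Lévy (completely asymmetric stable of index $1/2$) distribution with density \[ \frac{1}{\sqrt{3\pi}}\,x^{-3/2}e^{-1/(3x)},\qquad x>0 . \] Equivalently, the limit has the law of $\tfrac{2}{3}g^{-2}$, where $g$ is a standard Gaussian, and \[ \lim_{m\to\infty}\tilde\mu_m(|T|>tm^2)=\frac{1}{\sqrt{3\pi}}\int_t^\infty x^{-3/2}e^{-1/(3x)}\,dx \] for every $t>0$.
   Context: $\phi_{n,m}=\frac{2^{n+1}(2m+1)!(2m+3n)!}{m!^2 n!(2m+2n+2)!}$ is the number of rooted type II triangulations (multiple edges allowed, no loops) of a disc with $m+2$ boundary vertices and $n$ internal vertices. Let $\alpha=27/2$. The free marked triangulation of an $(m+2)$-gon is the probability measure $\tilde\mu_m$ on pairs $(T,v)$, where $T$ is such a rooted triangulation and $v$ is an internal vertex of $T$, given by $\tilde\mu_m(T,v)=\alpha^{-|T|}/\tilde Z_m$. Here $|T|$ is the number of internal vertices and $\tilde Z_m=\sum_n n\phi_{n,m}\alpha^{-n}$. *)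

theory Defs
  imports "HOL-Probability.Probability"
begin

text \<open>Number of rooted type II triangulations of an (m+2)-gon with n internal vertices.\<close>
definition phi :: "nat \<Rightarrow> nat \<Rightarrow> real" where
  "phi n m = 2 ^ (n + 1) * fact (2 * m + 1) * fact (2 * m + 3 * n)
             / (fact m ^ 2 * fact n * fact (2 * m + 2 * n + 2))"

definition alpha :: real where "alpha = 27 / 2"

definition Zt :: "nat \<Rightarrow> real" where
  "Zt m = (\<Sum>n. real n * phi n m * alpha powi (- int n))"

text \<open>Law of the number of internal vertices |T| under the free marked triangulation
  measure: each triangulation T with n internal vertices has n choices of marked vertex,
  each of weight alpha^(-n)/Zt m.\<close>
definition size_law :: "nat \<Rightarrow> nat measure" where
  "size_law m = density (count_space UNIV)
     (\<lambda>n. ennreal (real n * phi n m * alpha powi (- int n) / Zt m))"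

definition scaled_size_law :: "nat \<Rightarrow> real measure" where
  "scaled_size_law m = distr (size_law m) borel (\<lambda>n. real n / real m ^ 2)"

definition levy_density :: "real \<Rightarrow> real" where
  "levy_density x = (if x > 0 then 1 / sqrt (3 * pi) * x powr (-3/2) * exp (- 1 / (3 * x)) else 0)"

definition levy_law :: "real measure" where
  "levy_law = density lborel (\<lambda>x. ennreal (levy_density x))"

end

theory Submission
  imports Defs
begin

text \<open>
  The weight of size \<open>n\<close> factorises as
  \<open>n * phi n m * alpha powi (- n) = 2 n B n K m Q m n / ((2m + 2n + 1) (2m + 2n + 2))\<close>
  with \<open>B n = (4/27)^n * binomial (3n) n\<close> (\<open>inner_weight\<close>), a factor \<open>K m\<close> depending on \<open>m\<close>
  only (\<open>boundary_weight\<close>), and a product \<open>Q m n\<close> (\<open>ratio_prod\<close>) which is close to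
  \<open>exp (- m^2 / (3n))\<close>. Comparing consecutive ratios shows that \<open>sqrt n * B n\<close> increases, and
  it is bounded, so it has a positive limit \<open>beta\<close>. Hence along \<open>n ~ y m^2\<close> the weights
  rescaled by \<open>m^3 / K m\<close> converge to \<open>beta / 2 * y^(-3/2) * exp (- 1 / (3y))\<close>, and they have
  an integrable majorant. Read as the integral of a step function in \<open>y = n / m^2\<close>, a sum of
  weights over \<open>n \<le> x m^2\<close> converges by dominated convergence; dividing by the total sum
  cancels the unknown \<open>beta\<close>. The substitution \<open>u = 2 / (3 v^2)\<close> maps twice the standard
  normal density on the negative half-line onto the L\<acute>evy density, which both shows that
  the limit is a probability law and identifies it with the law of \<open>2 / (3 g^2)\<close>.
\<close>

section \<open>Factorisation of the weights\<close>

definition inner_weight :: "nat \<Rightarrow> real" where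
  "inner_weight n = (4/27)^n * fact (3*n) / (fact n * fact (2*n))"

definition boundary_weight :: "nat \<Rightarrow> real" where
  "boundary_weight m = (9/4)^m * fact (2*m+1) / fact m ^ 2"

text \<open>Since \<open>(3n + k) / (2n + k) = 3/2 * (1 - k / (6n + 3k))\<close>, the quotient of
  \<open>fact (2m + 3n) / fact (3n)\<close> by \<open>fact (2m + 2n) / fact (2n)\<close> is \<open>(9/4)^m * ratio_prod m n\<close>.\<close>
definition ratio_prod :: "nat \<Rightarrow> nat \<Rightarrow> real" where
  "ratio_prod m n = (\<Prod>k=1..2*m. 1 - real k / (6 * real n + 3 * real k))"

lemma fact_add_eq_prod: "(fact (a + k) :: real) = fact a * (\<Prod>i=1..k. real (a + i))"
  by (induction k) (simp_all add: prod.nat_ivl_Suc' algebra_simps)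

lemma alpha_powi_eq: "alpha powi (- int n) = (2/27)^n"
  by (simp add: alpha_def power_int_minus power_divide)

lemma phi_alpha_factor:
  "phi n m * alpha powi (- int n) = 2 * inner_weight n * boundary_weight m * ratio_prod m n
     / ((2 * real m + 2 * real n + 1) * (2 * real m + 2 * real n + 2))"
proof -
  define P where "P = (\<Prod>i=1..2*m. real (2*n + i))"
  define D where "D = (2 * real m + 2 * real n + 1) * (2 * real m + 2 * real n + 2)"
  have "P > 0" "D > 0"
    unfolding P_def D_def by (auto intro: prod_pos)
  have top: "(fact (2*m + 3*n) :: real) = fact (3*n) * ((9/4)^m * ratio_prod m n * P)"
  proof -
    have "real (3*n + i) = 3/2 * (1 - real i / (6 * real n + 3 * real i)) * real (2*n + i)"
      if "i \<ge> 1" for i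
      using that by (simp add: field_simps)
    then have "(\<Prod>i=1..2*m. real (3*n + i)) = (\<Prod>i=1..2*m. 3/2 * (1 - real i / (6 * real n + 3 * real i)) * real (2*n + i))"
      by (intro prod.cong) auto
    also have "\<dots> = (3/2)^(2*m) * ratio_prod m n * P"
      by (simp only: prod.distrib prod_constant card_atLeastAtMost ratio_prod_def P_def) simp
    finally show ?thesis
      using fact_add_eq_prod[of "3*n" "2*m"] by (simp add: add.commute power_mult power2_eq_square)
  qed
  have bottom: "(fact (2*m + 2*n + 2) :: real) = fact (2*n) * P * D"
  proof -
    have "(fact (2*m + 2*n + 2) :: real) = fact (2*n + 2*m) * D"
      unfolding D_def by (simp add: algebra_simps numeral_2_eq_2)
    then show ?thesis using fact_add_eq_prod[of "2*n" "2*m"] by (simp add: P_def)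
  qed
  have "(4::real)^n = 2^n * 2^n"
    by (simp add: power_mult_distrib[symmetric])
  with \<open>P > 0\<close> \<open>D > 0\<close> show ?thesis
    unfolding phi_def alpha_powi_eq top bottom inner_weight_def boundary_weight_def D_def[symmetric]
    by (simp add: field_simps del: fact_Suc)
qed

lemma boundary_weight_pos: "boundary_weight m > 0"
  by (simp add: boundary_weight_def)

lemma inner_weight_pos: "inner_weight n > 0"
  by (simp add: inner_weight_def)

section \<open>The inner weights\<close>

lemma inner_weight_Suc:
  "inner_weight (Suc n) = inner_weight n * (2 * (3 * real n + 1) * (3 * real n + 2) / (9 * (real n + 1) * (2 * real n + 1)))"
proof -
  have Suc_mult: "3 * Suc n = Suc (Suc (Suc (3 * n)))" "2 * Suc n = Suc (Suc (2 * n))" by simp_all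
  have "inner_weight (Suc n) = (4/27)^(Suc n) * ((3 * real n + 3) * (3 * real n + 2) * (3 * real n + 1) * fact (3 * n))
      / ((real n + 1) * fact n * ((2 * real n + 2) * (2 * real n + 1) * fact (2 * n)))"
    unfolding inner_weight_def Suc_mult fact_Suc by (simp add: algebra_simps)
  also have "\<dots> = inner_weight n * ((4/27) * ((3 * real n + 3) * (3 * real n + 2) * (3 * real n + 1))
      / ((real n + 1) * ((2 * real n + 2) * (2 * real n + 1))))"
    unfolding inner_weight_def by (simp add: field_simps)
  also have "(4/27) * ((3 * real n + 3) * (3 * real n + 2) * (3 * real n + 1)) / ((real n + 1) * ((2 * real n + 2) * (2 * real n + 1)))
      = 2 * (3 * real n + 1) * (3 * real n + 2) / (9 * (real n + 1) * (2 * real n + 1))"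
  proof -
    have "(real n + 1) * ((2 * real n + 2) * (2 * real n + 1)) \<noteq> 0" "9 * (real n + 1) * (2 * real n + 1) \<noteq> 0"
      by (simp_all add: add_pos_pos)
    from frac_eq_eq[OF this] show ?thesis by (simp add: algebra_simps)
  qed
  finally show ?thesis .
qed

lemma inner_weight_sq_mono: "real n * inner_weight n ^ 2 \<le> real (Suc n) * inner_weight (Suc n) ^ 2"
proof -
  define x N D where "x = real n" and "N = 2 * (3*x+1) * (3*x+2)" and "D = 9 * (x+1) * (2*x+1)"
  have "x \<ge> 0" "D > 0" by (simp_all add: x_def D_def)
  have "(x + 1) * N^2 - x * D^2 = (x + 1) * (63*x^2 + 63*x + 16)"
    by (simp add: N_def D_def algebra_simps power2_eq_square)
  with \<open>x \<ge> 0\<close> \<open>D > 0\<close> have "x \<le> (x + 1) * (N / D)^2"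
    by (simp add: power_divide field_simps)
  then have "x * inner_weight n ^ 2 \<le> (x + 1) * (N / D)^2 * inner_weight n ^ 2"
    by (rule mult_right_mono) simp
  moreover have "inner_weight (Suc n) ^ 2 = inner_weight n ^ 2 * (N / D)^2"
    unfolding inner_weight_Suc x_def N_def D_def by (simp only: power_mult_distrib)
  ultimately show ?thesis
    by (simp add: x_def algebra_simps)
qed

lemma inner_weight_sq_le: "real (Suc n) * inner_weight n ^ 2 \<le> 1"
proof (induction n)
  case 0
  show ?case by (simp add: inner_weight_def)
next
  case (Suc n)
  define x N D where "x = real n" and "N = 2 * (3*x+1) * (3*x+2)" and "D = 9 * (x+1) * (2*x+1)"
  have "x \<ge> 0" "D > 0" by (simp_all add: x_def D_def)
  have "(x + 1) * D^2 - (x + 2) * N^2 = 261*x^3 + 459*x^2 + 263*x + 49"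
    by (simp add: N_def D_def algebra_simps power2_eq_square power3_eq_cube)
  with \<open>x \<ge> 0\<close> \<open>D > 0\<close> have "(x + 2) * (N / D)^2 \<le> x + 1"
    by (simp add: power_divide field_simps)
  have "inner_weight (Suc n) ^ 2 = inner_weight n ^ 2 * (N / D)^2"
    unfolding inner_weight_Suc x_def N_def D_def by (simp only: power_mult_distrib)
  then have "real (Suc (Suc n)) * inner_weight (Suc n) ^ 2 = (x + 2) * (N / D)^2 * inner_weight n ^ 2"
    by (simp add: x_def algebra_simps)
  also have "\<dots> \<le> (x + 1) * inner_weight n ^ 2"
    using \<open>(x + 2) * (N / D)^2 \<le> x + 1\<close> by (rule mult_right_mono) simp
  also have "\<dots> \<le> 1"
    using Suc by (simp add: x_def add.commute)
  finally show ?case .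
qed

lemma incseq_sqrt_inner_weight: "incseq (\<lambda>n. sqrt (real n) * inner_weight n)"
proof (rule incseq_SucI)
  fix n
  have "(sqrt (real n) * inner_weight n)^2 \<le> (sqrt (real (Suc n)) * inner_weight (Suc n))^2"
    using inner_weight_sq_mono[of n] by (simp add: power_mult_distrib del: of_nat_Suc)
  then show "sqrt (real n) * inner_weight n \<le> sqrt (real (Suc n)) * inner_weight (Suc n)"
    by (rule power2_le_imp_le) (simp add: inner_weight_pos less_imp_le)
qed

lemma sqrt_inner_weight_le_1: "sqrt (real n) * inner_weight n \<le> 1"
proof -
  have "(sqrt (real n) * inner_weight n)^2 \<le> real (Suc n) * inner_weight n ^ 2"
    using mult_right_mono[of "real n" "real (Suc n)" "inner_weight n ^ 2"] by (simp add: power_mult_distrib)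
  also have "\<dots> \<le> 1" by (rule inner_weight_sq_le)
  finally show ?thesis by (simp add: power_le_one_iff inner_weight_pos less_imp_le)
qed

text \<open>By Stirling's formula the limit is \<open>sqrt (3 / (4 * pi))\<close>; it cancels on normalisation,
  so only its positivity is needed.\<close>
definition inner_const :: real where
  "inner_const = (SUP n. sqrt (real n) * inner_weight n)"

lemma sqrt_inner_weight_tendsto: "(\<lambda>n. sqrt (real n) * inner_weight n) \<longlonglongrightarrow> inner_const"
  unfolding inner_const_def
  by (rule LIMSEQ_incseq_SUP[OF _ incseq_sqrt_inner_weight]) (auto intro: bdd_aboveI2 sqrt_inner_weight_le_1)

lemma sqrt_inner_weight_le_const: "sqrt (real n) * inner_weight n \<le> inner_const"
  using incseq_le[OF incseq_sqrt_inner_weight sqrt_inner_weight_tendsto] by simp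

lemma inner_const_pos: "inner_const > 0"
  using sqrt_inner_weight_le_const[of 1] inner_weight_pos[of 1] by simp

section \<open>Bounds for the correction product\<close>

lemma ratio_prod_pos: "ratio_prod m n > 0"
  unfolding ratio_prod_def by (intro prod_pos) (auto simp: field_simps)

lemma sum_of_nat_upto_double: "(\<Sum>k=1..2*m. real k) = real m * (2 * real m + 1)"
  using double_gauss_sum_from_Suc_0[of "2*m", where 'a=real] by simp

lemma ratio_prod_le_exp:
  "ratio_prod m n \<le> exp (- (real m * (2 * real m + 1)) / (6 * (real n + real m)))"
proof -
  have "ratio_prod m n \<le> (\<Prod>k=1..2*m. exp (- real k / (6 * (real n + real m))))"
    unfolding ratio_prod_def
  proof (rule prod_mono, safe)
    fix k assume k: "k \<in> {1..2*m}"
    show "0 \<le> 1 - real k / (6 * real n + 3 * real k)" using k by (simp add: field_simps)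
    have "1 - real k / (6 * real n + 3 * real k) \<le> exp (- (real k / (6 * real n + 3 * real k)))"
      using exp_ge_add_one_self[of "- (real k / (6 * real n + 3 * real k))"] by simp
    also have "\<dots> \<le> exp (- real k / (6 * (real n + real m)))"
      using k by (simp add: frac_le)
    finally show "1 - real k / (6 * real n + 3 * real k) \<le> exp (- real k / (6 * (real n + real m)))" .
  qed
  also have "\<dots> = exp (\<Sum>k=1..2*m. - real k / (6 * (real n + real m)))"
    by (simp add: exp_sum)
  also have "\<dots> = exp (- (\<Sum>k=1..2*m. real k) / (6 * (real n + real m)))"
    by (simp add: sum_divide_distrib sum_negf)
  finally show ?thesis by (simp only: sum_of_nat_upto_double)
qed

lemma ratio_prod_le_1: "ratio_prod m n \<le> 1"
  using ratio_prod_le_exp[of m n] by (rule order_trans) simp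

lemma exp_le_ratio_prod:
  assumes "n \<ge> 1"
  shows "exp (- (real m * (2 * real m + 1)) / (6 * real n) - 4 * real m ^ 3 / (9 * real n ^ 2)) \<le> ratio_prod m n"
proof -
  have "(\<Prod>k=1..2*m. exp (- real k / (6 * real n) - 2 * real m ^ 2 / (9 * real n ^ 2))) \<le> ratio_prod m n"
    unfolding ratio_prod_def
  proof (rule prod_mono, safe)
    fix k assume k: "k \<in> {1..2*m}"
    define z where "z = real k / (6 * real n + 3 * real k)"
    have "0 \<le> z" "z \<le> 1/2" "z \<le> real k / (6 * real n)"
      unfolding z_def using assms k by (simp_all add: field_simps frac_le)
    have "z^2 \<le> (2 * real m / (6 * real n))^2"
      using \<open>0 \<le> z\<close> \<open>z \<le> real k / (6 * real n)\<close> k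
      by (intro power_mono order_trans[OF _ divide_right_mono[of "real k" "2 * real m"]]) auto
    then have "- real k / (6 * real n) - 2 * real m ^ 2 / (9 * real n ^ 2) \<le> - z - 2 * z^2"
      using \<open>z \<le> real k / (6 * real n)\<close> by (simp add: power_divide power_mult_distrib)
    also have "\<dots> \<le> ln (1 - z)"
      using ln_one_minus_pos_lower_bound[OF \<open>0 \<le> z\<close> \<open>z \<le> 1/2\<close>] .
    finally show "exp (- real k / (6 * real n) - 2 * real m ^ 2 / (9 * real n ^ 2)) \<le> 1 - real k / (6 * real n + 3 * real k)"
      using \<open>z \<le> 1/2\<close> by (simp add: z_def[symmetric] ln_ge_iff)
  qed simp
  moreover have "(\<Sum>k=1..2*m. - real k / (6 * real n) - 2 * real m ^ 2 / (9 * real n ^ 2))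
      = - (\<Sum>k=1..2*m. real k) / (6 * real n) - real (2*m) * (2 * real m ^ 2 / (9 * real n ^ 2))"
    by (simp add: sum_subtractf sum_divide_distrib sum_negf)
  moreover have "\<dots> = - (real m * (2 * real m + 1)) / (6 * real n) - 4 * real m ^ 3 / (9 * real n ^ 2)"
    unfolding sum_of_nat_upto_double by (simp add: power2_eq_square power3_eq_cube)
  ultimately show ?thesis
    by (simp add: exp_sum[symmetric])
qed

section \<open>Local limit and majorants of the rescaled weights\<close>

definition size_weight :: "nat \<Rightarrow> nat \<Rightarrow> real" where
  "size_weight m n = real n * phi n m * alpha powi (- int n)"

definition rescaled_weight :: "nat \<Rightarrow> nat \<Rightarrow> real" where
  "rescaled_weight m n = real m ^ 3 * size_weight m n / boundary_weight m"

definition levy_kernel :: "real \<Rightarrow> real" where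
  "levy_kernel y = exp (- 1 / (3 * y)) / (y * sqrt y)"

lemma size_weight_nonneg: "size_weight m n \<ge> 0"
  by (simp add: size_weight_def phi_def alpha_def)

lemma rescaled_weight_eq:
  "rescaled_weight m n = 2 * (sqrt (real n) * inner_weight n) * ratio_prod m n
     * (real m ^ 3 * sqrt (real n) / ((2 * real m + 2 * real n + 1) * (2 * real m + 2 * real n + 2)))"
proof -
  define D where "D = (2 * real m + 2 * real n + 1) * (2 * real m + 2 * real n + 2)"
  have "D > 0" by (simp add: D_def add_pos_pos)
  then have "rescaled_weight m n = 2 * real n * inner_weight n * ratio_prod m n * real m ^ 3 / D"
    using boundary_weight_pos[of m]
    unfolding rescaled_weight_def size_weight_def mult.assoc[of "real n"] phi_alpha_factor D_def[symmetric]
    by (simp add: field_simps)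
  also have "real n = sqrt (real n) * sqrt (real n)" by simp
  finally show ?thesis
    by (simp add: D_def algebra_simps)
qed

lemma rescaled_weight_nonneg: "rescaled_weight m n \<ge> 0"
  by (simp add: rescaled_weight_def size_weight_nonneg boundary_weight_pos less_imp_le)

lemma lim_1_over_square: "(\<lambda>m. 1 / real m ^ 2) \<longlonglongrightarrow> 0"
  using tendsto_mult[OF lim_1_over_n lim_1_over_n] by (simp add: power2_eq_square)

context
  fixes n :: "nat \<Rightarrow> nat" and y :: real
  assumes ratio: "(\<lambda>m. real (n m) / real m ^ 2) \<longlonglongrightarrow> y" and "y > 0"
begin

lemma quadratic_seq_lower_bound: "eventually (\<lambda>m. m \<ge> 1 \<and> y / 2 * real m \<le> real (n m)) sequentially"
proof -
  from \<open>y > 0\<close> have "y / 2 < y" by simp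
  from order_tendstoD(1)[OF ratio this] eventually_ge_at_top[of 1] show ?thesis
  proof eventually_elim
    case (elim m)
    then have "y / 2 * real m \<le> y / 2 * real m ^ 2"
      using \<open>y > 0\<close> by (intro mult_left_mono) (auto simp: power2_eq_square)
    also have "\<dots> \<le> real (n m)" using elim by (simp add: field_simps)
    finally show ?case using elim by simp
  qed
qed

lemma quadratic_seq_eventually_pos: "eventually (\<lambda>m. m \<ge> 1 \<and> n m \<ge> 1) sequentially"
  using quadratic_seq_lower_bound
proof eventually_elim
  case (elim m)
  have "0 < y / 2 * real m" using elim \<open>y > 0\<close> by simp
  with elim have "real (n m) > 0" by linarith
  with elim show ?case by simp
qed

lemma quadratic_seq_filterlim: "filterlim n sequentially sequentially"
  unfolding filterlim_sequentially_iff_filterlim_real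
proof (rule filterlim_at_top_mono)
  show "LIM m sequentially. y / 2 * real m :> at_top"
    using \<open>y > 0\<close> by (intro filterlim_tendsto_pos_mult_at_top[OF tendsto_const _ filterlim_real_sequentially]) simp
qed (use quadratic_seq_lower_bound in \<open>auto elim: eventually_mono\<close>)

lemma algebraic_factor_tendsto:
  "(\<lambda>m. real m ^ 3 * sqrt (real (n m)) / ((2 * real m + 2 * real (n m) + 1) * (2 * real m + 2 * real (n m) + 2)))
    \<longlonglongrightarrow> sqrt y / ((2 * y) * (2 * y))"
proof -
  define r where "r m = real (n m) / real m ^ 2" for m
  have "(\<lambda>m. sqrt (r m) / ((2 * (1 / real m) + 2 * r m + 1 / real m ^ 2) * (2 * (1 / real m) + 2 * r m + 2 * (1 / real m ^ 2))))
      \<longlonglongrightarrow> sqrt y / ((2 * 0 + 2 * y + 0) * (2 * 0 + 2 * y + 2 * 0))"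
    using ratio \<open>y > 0\<close> unfolding r_def by (intro tendsto_intros lim_1_over_n lim_1_over_square) auto
  moreover have "eventually (\<lambda>m. sqrt (r m) / ((2 * (1 / real m) + 2 * r m + 1 / real m ^ 2) * (2 * (1 / real m) + 2 * r m + 2 * (1 / real m ^ 2)))
      = real m ^ 3 * sqrt (real (n m)) / ((2 * real m + 2 * real (n m) + 1) * (2 * real m + 2 * real (n m) + 2))) sequentially"
    using quadratic_seq_eventually_pos
  proof eventually_elim
    case (elim m)
    have "real m > 0" using elim by simp
    have root: "sqrt (r m) = sqrt (real (n m)) / real m"
      using elim by (simp add: r_def real_sqrt_divide)
    have denominators: "2 * (1 / real m) + 2 * r m + 1 / real m ^ 2 = (2 * real m + 2 * real (n m) + 1) / real m ^ 2"
      "2 * (1 / real m) + 2 * r m + 2 * (1 / real m ^ 2) = (2 * real m + 2 * real (n m) + 2) / real m ^ 2"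
      using elim by (simp_all add: r_def field_simps power2_eq_square)
    have "2 * real m + 2 * real (n m) + 1 > 0" "2 * real m + 2 * real (n m) + 2 > 0"
      by simp_all
    then show ?case
      unfolding root denominators using \<open>real m > 0\<close> by (simp add: field_simps power2_eq_square power3_eq_cube)
  qed
  ultimately show ?thesis
    by (simp add: tendsto_cong)
qed

lemma ratio_prod_tendsto: "(\<lambda>m. ratio_prod m (n m)) \<longlonglongrightarrow> exp (- 1 / (3 * y))"
proof (rule tendsto_sandwich)
  define r where "r m = real (n m) / real m ^ 2" for m
  have r: "r \<longlonglongrightarrow> y" using ratio by (simp add: r_def[abs_def])
  have "(\<lambda>m. exp (- (2 + 1 / real m) / (6 * r m) - 4 * (1 / real m) / (9 * r m ^ 2)))
      \<longlonglongrightarrow> exp (- (2 + 0) / (6 * y) - 4 * 0 / (9 * y ^ 2))"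
    using \<open>y > 0\<close> by (intro tendsto_intros r lim_1_over_n) auto
  then show "(\<lambda>m. exp (- (2 + 1 / real m) / (6 * r m) - 4 * (1 / real m) / (9 * r m ^ 2))) \<longlonglongrightarrow> exp (- 1 / (3 * y))"
    by simp
  have "(\<lambda>m. exp (- ((2 + 1 / real m) / (6 * (r m + 1 / real m))))) \<longlonglongrightarrow> exp (- ((2 + 0) / (6 * (y + 0))))"
    using \<open>y > 0\<close> by (intro tendsto_intros r lim_1_over_n) auto
  then show "(\<lambda>m. exp (- ((2 + 1 / real m) / (6 * (r m + 1 / real m))))) \<longlonglongrightarrow> exp (- 1 / (3 * y))"
    by simp
  show "eventually (\<lambda>m. exp (- (2 + 1 / real m) / (6 * r m) - 4 * (1 / real m) / (9 * r m ^ 2)) \<le> ratio_prod m (n m)) sequentially"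
    using quadratic_seq_eventually_pos
  proof eventually_elim
    case (elim m)
    have "- (2 + 1 / real m) / (6 * r m) - 4 * (1 / real m) / (9 * r m ^ 2)
        = - (real m * (2 * real m + 1)) / (6 * real (n m)) - 4 * real m ^ 3 / (9 * real (n m) ^ 2)"
    proof -
      have "real m > 0" "real (n m) > 0" using elim by simp_all
      then show ?thesis unfolding r_def by (simp add: field_simps power2_eq_square power3_eq_cube)
    qed
    then show ?case using exp_le_ratio_prod[of "n m" m] elim by simp
  qed
  show "eventually (\<lambda>m. ratio_prod m (n m) \<le> exp (- ((2 + 1 / real m) / (6 * (r m + 1 / real m))))) sequentially"
    using quadratic_seq_eventually_pos
  proof eventually_elim
    case (elim m)
    have "r m + 1 / real m = (real (n m) + real m) / real m ^ 2"
      "real m * (2 * real m + 1) = (2 + 1 / real m) * real m ^ 2"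
      using elim by (simp_all add: r_def field_simps power2_eq_square)
    then have "(2 + 1 / real m) / (6 * (r m + 1 / real m)) = real m * (2 * real m + 1) / (6 * (real (n m) + real m))"
      by (simp add: divide_divide_eq_right)
    then show ?case using ratio_prod_le_exp[of m "n m"] by simp
  qed
qed

lemma rescaled_weight_tendsto: "(\<lambda>m. rescaled_weight m (n m)) \<longlonglongrightarrow> inner_const / 2 * levy_kernel y"
proof -
  have "(\<lambda>m. sqrt (real (n m)) * inner_weight (n m)) \<longlonglongrightarrow> inner_const"
    using sqrt_inner_weight_tendsto quadratic_seq_filterlim by (rule filterlim_compose)
  then have "(\<lambda>m. rescaled_weight m (n m)) \<longlonglongrightarrow> 2 * inner_const * exp (- 1 / (3 * y)) * (sqrt y / ((2 * y) * (2 * y)))"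
    unfolding rescaled_weight_eq by (intro tendsto_intros ratio_prod_tendsto algebraic_factor_tendsto)
  also have "2 * inner_const * exp (- 1 / (3 * y)) * (sqrt y / ((2 * y) * (2 * y))) = inner_const / 2 * levy_kernel y"
    using \<open>y > 0\<close> real_sqrt_mult_self[of y] by (simp add: levy_kernel_def field_simps del: real_sqrt_mult_self)
  finally show ?thesis .
qed

end

lemma rescaled_weight_le:
  assumes "0 < t" "real n \<le> t" "t \<le> real m + real n"
  defines "u \<equiv> real m ^ 2 / t"
  shows "rescaled_weight m n \<le> inner_const / 2 * ratio_prod m n * (u * sqrt u)"
proof -
  have "2 * t \<le> 2 * real m + 2 * real n + 1" "2 * t \<le> 2 * real m + 2 * real n + 2"
    using assms(3) by simp_all
  then have "4 * t ^ 2 \<le> (2 * real m + 2 * real n + 1) * (2 * real m + 2 * real n + 2)"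
    using mult_mono[of "2 * t" _ "2 * t"] \<open>0 < t\<close> by (simp add: power2_eq_square)
  then have "real m ^ 3 * sqrt (real n) / ((2 * real m + 2 * real n + 1) * (2 * real m + 2 * real n + 2))
      \<le> real m ^ 3 * sqrt t / (4 * t ^ 2)"
    using assms(1,2) by (intro frac_le mult_left_mono) auto
  also have "\<dots> = u * sqrt u / 4"
    using \<open>0 < t\<close> real_sqrt_mult_self[of t]
    by (simp add: u_def real_sqrt_divide field_simps power2_eq_square power3_eq_cube del: real_sqrt_mult_self)
  finally have factor: "real m ^ 3 * sqrt (real n) / ((2 * real m + 2 * real n + 1) * (2 * real m + 2 * real n + 2))
      \<le> u * sqrt u / 4" .
  have "rescaled_weight m n \<le> 2 * inner_const * ratio_prod m n * (u * sqrt u / 4)"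
    unfolding rescaled_weight_eq using sqrt_inner_weight_le_const[of n] ratio_prod_pos[of m n] factor inner_const_pos
    by (intro mult_mono) (auto simp: inner_weight_pos less_imp_le)
  then show ?thesis by (simp add: mult_ac)
qed

lemma u_sqrt_u_exp_le:
  fixes u :: real
  assumes "u \<ge> 0"
  shows "u * sqrt u * exp (- u / 3) \<le> 10"
proof -
  have "2 * u / 9 \<le> exp (2 * u / 9)"
    using exp_ge_add_one_self[of "2 * u / 9"] by linarith
  then have "(2 * u / 9)^3 \<le> exp (2 * u / 9) ^ 3"
    using assms by (intro power_mono) auto
  also have "exp (2 * u / 9) ^ 3 = exp (u / 3) ^ 2"
    by (simp add: exp_of_nat_mult[symmetric])
  finally have "(2 * u / 9)^3 \<le> exp (u / 3) ^ 2" .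
  have "(u * sqrt u)^2 = (729 / 8) * (2 * u / 9)^3"
    using assms by (simp add: power_mult_distrib power2_eq_square power3_eq_cube)
  also have "\<dots> \<le> (729 / 8) * exp (u / 3) ^ 2"
    using \<open>(2 * u / 9)^3 \<le> exp (u / 3) ^ 2\<close> by simp
  also have "\<dots> \<le> (10 * exp (u / 3))^2"
    by (simp add: power_mult_distrib)
  finally have "(u * sqrt u)^2 \<le> (10 * exp (u / 3))^2" .
  then have "u * sqrt u \<le> 10 * exp (u / 3)"
    by (rule power2_le_imp_le) simp
  then show ?thesis
    by (simp add: exp_minus field_simps)
qed

lemma rescaled_weight_le_const:
  assumes "m \<ge> 1" "n \<ge> 1"
  shows "rescaled_weight m n \<le> 5 * inner_const"
proof -
  define u where "u = real m ^ 2 / (real n + real m)"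
  have "u \<ge> 0" by (simp add: u_def)
  have "u / 3 \<le> real m * (2 * real m + 1) / (6 * (real n + real m))"
    using assms by (simp add: u_def field_simps power2_eq_square)
  then have "exp (- (real m * (2 * real m + 1)) / (6 * (real n + real m))) \<le> exp (- u / 3)"
    by simp
  with ratio_prod_le_exp[of m n] have "ratio_prod m n \<le> exp (- u / 3)"
    by (rule order_trans)
  have "rescaled_weight m n \<le> inner_const / 2 * ratio_prod m n * (u * sqrt u)"
    using rescaled_weight_le[of "real n + real m" n m] assms by (simp add: u_def)
  also have "\<dots> \<le> inner_const / 2 * (u * sqrt u * exp (- u / 3))"
    using \<open>ratio_prod m n \<le> exp (- u / 3)\<close> \<open>u \<ge> 0\<close> inner_const_pos
    by (simp add: mult_left_mono mult_right_mono mult.commute mult.left_commute)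
  also have "\<dots> \<le> inner_const / 2 * 10"
    using u_sqrt_u_exp_le[OF \<open>u \<ge> 0\<close>] inner_const_pos by (intro mult_left_mono) auto
  finally show ?thesis by simp
qed

lemma rescaled_weight_le_kernel:
  assumes "m \<ge> 1" "y \<ge> 1" "real m ^ 2 * y \<le> real n"
  shows "rescaled_weight m n \<le> inner_const * levy_kernel y"
proof -
  define u where "u = real m ^ 2 / real n"
  have "real m ^ 2 \<ge> 1" using assms(1) by simp
  then have "1 \<le> real m ^ 2 * y" using mult_mono[of 1 "real m ^ 2" 1 y] assms(2) by simp
  with assms(3) have "real n > 0" by linarith
  have "u \<le> 1 / y" "0 \<le> u"
    using assms \<open>real n > 0\<close> by (simp_all add: u_def field_simps)
  then have "u * sqrt u \<le> 1 / y * sqrt (1 / y)"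
    using assms(2) by (intro mult_mono) auto
  also have "\<dots> \<le> 2 * exp (- 1 / (3 * y)) / (y * sqrt y)"
  proof -
    have "1 / (3 * y) \<le> 1 / 2" using assms(2) by (simp add: field_simps)
    then have "1 \<le> 2 * exp (- 1 / (3 * y))"
      using exp_ge_add_one_self[of "- 1 / (3 * y)"] by linarith
    then show ?thesis using assms(2) by (simp add: real_sqrt_divide field_simps)
  qed
  finally have "u * sqrt u \<le> 2 * levy_kernel y" by (simp add: levy_kernel_def)
  have "rescaled_weight m n \<le> inner_const / 2 * ratio_prod m n * (u * sqrt u)"
    using rescaled_weight_le[of "real n" n m] \<open>real n > 0\<close> by (simp add: u_def)
  also have "\<dots> = inner_const / 2 * (ratio_prod m n * (u * sqrt u))"
    by (simp only: mult.assoc)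
  also have "\<dots> \<le> inner_const / 2 * (1 * (2 * levy_kernel y))"
  proof (rule mult_left_mono)
    show "ratio_prod m n * (u * sqrt u) \<le> 1 * (2 * levy_kernel y)"
      using mult_mono[OF ratio_prod_le_1 \<open>u * sqrt u \<le> 2 * levy_kernel y\<close>] \<open>0 \<le> u\<close> by simp
  qed (use inner_const_pos in simp)
  finally show ?thesis by simp
qed

section \<open>The L\<acute>evy law as an image of the normal law\<close>

definition levy_map :: "real \<Rightarrow> real" where
  "levy_map v = 2 / (3 * v ^ 2)"

lemma powr_three_halves: "y > 0 \<Longrightarrow> y powr (3 / 2) = y * sqrt (y :: real)"
  using powr_add[of y 1 "1 / 2"] by (simp add: powr_half_sqrt)

lemma levy_density_eq_kernel: "y > 0 \<Longrightarrow> levy_density y = levy_kernel y / sqrt (3 * pi)"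
  by (simp add: levy_density_def levy_kernel_def powr_minus_divide powr_three_halves)

lemma levy_density_nonneg: "levy_density y \<ge> 0"
  by (simp add: levy_density_def)

lemma borel_measurable_levy_density [measurable]: "levy_density \<in> borel_measurable borel"
  unfolding levy_density_def by measurable

lemma levy_kernel_levy_map:
  assumes "v < 0"
  shows "levy_kernel (levy_map v) / sqrt (3 * pi) * (- 4 / (3 * v ^ 3)) = 2 * std_normal_density v"
proof -
  define w where "w = - v"
  have "w > 0" "v = - w" using assms by (simp_all add: w_def)
  have "sqrt (levy_map v) = sqrt 2 / (sqrt 3 * w)"
    using \<open>w > 0\<close> by (simp add: levy_map_def \<open>v = - w\<close> real_sqrt_divide real_sqrt_mult)
  moreover have "- 1 / (3 * levy_map v) = - (v ^ 2) / 2"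
    using \<open>w > 0\<close> by (simp add: levy_map_def \<open>v = - w\<close> field_simps)
  moreover have "sqrt (3 * pi) = sqrt 3 * sqrt pi" "sqrt (2 * pi) = sqrt 2 * sqrt pi"
    by (simp_all add: real_sqrt_mult)
  moreover have "sqrt 2 > 0" "sqrt 3 > 0" "sqrt pi > 0" by simp_all
  ultimately show ?thesis
    using \<open>w > 0\<close> unfolding levy_kernel_def std_normal_density_def
    by (simp add: levy_map_def \<open>v = - w\<close> field_simps power2_eq_square power3_eq_cube)
qed

lemma levy_map_eq_inverse: "levy_map = (\<lambda>v. 2 / 3 * inverse (v ^ 2))"
  by (auto simp: levy_map_def field_simps)

lemma levy_map_tendsto_at_bot: "(levy_map \<longlongrightarrow> 0) at_bot"
proof -
  have "LIM v at_bot. (v::real) ^ 2 :> at_top"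
    by (rule filterlim_pow_at_bot_even) (auto simp: filterlim_ident)
  then have "((\<lambda>v. 2 / 3 * inverse ((v::real) ^ 2)) \<longlongrightarrow> 2 / 3 * 0) at_bot"
    by (intro tendsto_intros tendsto_inverse_0_at_top)
  then show ?thesis by (simp add: levy_map_eq_inverse)
qed

lemma levy_map_at_left_0: "filterlim levy_map at_top (at_left 0)"
proof -
  have "filterlim (\<lambda>v::real. v ^ 2) (at_right 0) (at_left 0)"
    unfolding filterlim_at
    by (auto simp: eventually_at_filter intro!: tendsto_eq_intros)
  then have "filterlim (\<lambda>v::real. inverse (v ^ 2)) at_top (at_left 0)"
    by (rule filterlim_compose[OF filterlim_inverse_at_top_right])
  then show ?thesis
    unfolding levy_map_eq_inverse by (intro filterlim_tendsto_pos_mult_at_top[OF tendsto_const]) simp_all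
qed

lemma set_integrable_std_normal_density:
  "A \<in> sets borel \<Longrightarrow> set_integrable lborel A (\<lambda>x. 2 * std_normal_density x)"
  unfolding set_integrable_def by (intro integrable_mult_indicator) auto

lemma levy_kernel_integral_substitution:
  fixes b :: real and B :: ereal
  assumes "b \<le> 0" and B: "((ereal \<circ> levy_map \<circ> real_of_ereal) \<longlongrightarrow> B) (at_left (ereal b))"
  defines "f \<equiv> \<lambda>u. levy_kernel u / sqrt (3 * pi)"
  shows "set_integrable lborel (einterval 0 B) f"
    and "(LBINT u=0..B. f u) = (LBINT v=-\<infinity>..ereal b. 2 * std_normal_density v)"
proof -
  have A: "((ereal \<circ> levy_map \<circ> real_of_ereal) \<longlongrightarrow> 0) (at_right (-\<infinity>))"
    unfolding zero_ereal_def ereal_tendsto_simps using levy_map_tendsto_at_bot .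
  have change: "f (levy_map v) * (- 4 / (3 * v ^ 3)) = 2 * std_normal_density v" if "v < 0" for v
    using levy_kernel_levy_map[OF that] by (simp add: f_def)
  have I: "set_integrable lborel (einterval (-\<infinity>) (ereal b)) (\<lambda>v. f (levy_map v) * (- 4 / (3 * v ^ 3)))"
    using set_integrable_std_normal_density[of "einterval (-\<infinity>) (ereal b)"]
    by (rule set_integrable_cong[THEN iffD1, rotated -1]) (use \<open>b \<le> 0\<close> change in auto)
  have hyps: "\<And>v. - \<infinity> < ereal v \<Longrightarrow> ereal v < ereal b \<Longrightarrow> DERIV levy_map v :> - 4 / (3 * v ^ 3)"
    "\<And>v. - \<infinity> < ereal v \<Longrightarrow> ereal v < ereal b \<Longrightarrow> isCont f (levy_map v)"
    "\<And>v. - \<infinity> < ereal v \<Longrightarrow> ereal v < ereal b \<Longrightarrow> isCont (\<lambda>v. - 4 / (3 * v ^ 3)) v"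
    "\<And>v. - \<infinity> < ereal v \<Longrightarrow> ereal v < ereal b \<Longrightarrow> 0 \<le> f (levy_map v)"
    "\<And>v. - \<infinity> \<le> ereal v \<Longrightarrow> ereal v \<le> ereal b \<Longrightarrow> 0 \<le> - 4 / (3 * v ^ 3)"
  proof -
    fix v assume "ereal v < ereal b"
    then have "v < 0" using \<open>b \<le> 0\<close> by simp
    then have "levy_map v > 0" by (simp add: levy_map_def)
    show "DERIV levy_map v :> - 4 / (3 * v ^ 3)"
      using \<open>v < 0\<close> unfolding levy_map_def
      by (auto intro!: derivative_eq_intros simp: field_simps power2_eq_square power3_eq_cube)
    show "isCont f (levy_map v)"
      using \<open>levy_map v > 0\<close> unfolding f_def levy_kernel_def by (intro continuous_intros) auto
    show "isCont (\<lambda>v. - 4 / (3 * v ^ 3)) v"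
      using \<open>v < 0\<close> by (intro continuous_intros) auto
    show "0 \<le> f (levy_map v)"
      using \<open>levy_map v > 0\<close> by (simp add: f_def levy_kernel_def)
  next
    fix v assume "ereal v \<le> ereal b"
    then have "v \<le> 0" using \<open>b \<le> 0\<close> by simp
    then have "v ^ 3 \<le> 0" by (simp add: power3_eq_cube mult_nonneg_nonpos mult_nonpos_nonpos)
    then show "0 \<le> - 4 / (3 * v ^ 3)" by (simp add: divide_nonpos_neg divide_nonneg_nonpos)
  qed
  have "- \<infinity> < ereal b" by simp
  note substitution = interval_integral_substitution_nonneg[OF this hyps A B I]
  show "set_integrable lborel (einterval 0 B) f"
    using substitution(1) .
  have "(LBINT u=0..B. f u) = (LBINT v=-\<infinity>..ereal b. f (levy_map v) * (- 4 / (3 * v ^ 3)))"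
    using substitution(2) .
  also have "\<dots> = (LBINT v=-\<infinity>..ereal b. 2 * std_normal_density v)"
    using \<open>b \<le> 0\<close> change by (intro interval_integral_cong) auto
  finally show "(LBINT u=0..B. f u) = (LBINT v=-\<infinity>..ereal b. 2 * std_normal_density v)" .
qed

lemma ennreal_set_integral_eq_nn_integral:
  fixes f :: "'a \<Rightarrow> real"
  assumes "A \<in> sets M" "set_integrable M A f" "\<And>x. x \<in> A \<Longrightarrow> f x \<ge> 0"
  shows "ennreal (LINT x:A|M. f x) = (\<integral>\<^sup>+x. ennreal (f x) * indicator A x \<partial>M)"
proof -
  have "(\<integral>\<^sup>+x. ennreal (indicator A x *\<^sub>R f x) \<partial>M) = ennreal (LINT x:A|M. f x)"
    using assms unfolding set_integrable_def set_lebesgue_integral_def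
    by (intro nn_integral_eq_integral) (auto simp: indicator_def)
  moreover have "ennreal (indicator A x *\<^sub>R f x) = ennreal (f x) * indicator A x" for x
    by (auto simp: indicator_def)
  ultimately show ?thesis by simp
qed

lemma nn_integral_std_normal_density_reflect:
  "(\<integral>\<^sup>+v. ennreal (std_normal_density v) * indicator {..<b} v \<partial>lborel)
    = (\<integral>\<^sup>+v. ennreal (std_normal_density v) * indicator {-b<..} v \<partial>lborel)"
proof -
  have "(\<integral>\<^sup>+v. ennreal (std_normal_density v) * indicator {..<b} v \<partial>lborel)
      = (\<integral>\<^sup>+v. ennreal (std_normal_density v) * indicator {..<b} v \<partial>distr lborel borel uminus)"
    by (simp add: lborel_distr_uminus)
  also have "\<dots> = (\<integral>\<^sup>+v. ennreal (std_normal_density v) * indicator {-b<..} v \<partial>lborel)"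
    by (subst nn_integral_distr) (auto simp: std_normal_density_def indicator_def intro!: nn_integral_cong)
  finally show ?thesis .
qed

lemma nn_integral_twice_std_normal_density_lessThan:
  "(\<integral>\<^sup>+v. ennreal (2 * std_normal_density v) * indicator {..<b} v \<partial>lborel)
    = (\<integral>\<^sup>+v. ennreal (std_normal_density v) * (indicator {..<b} v + indicator {-b<..} v) \<partial>lborel)"
proof -
  have "(\<integral>\<^sup>+v. ennreal (2 * std_normal_density v) * indicator {..<b} v \<partial>lborel)
      = 2 * (\<integral>\<^sup>+v. ennreal (std_normal_density v) * indicator {..<b} v \<partial>lborel)"
    by (subst nn_integral_cmult[symmetric]) (auto simp: ennreal_mult mult.assoc)
  also have "\<dots> = (\<integral>\<^sup>+v. ennreal (std_normal_density v) * indicator {..<b} v \<partial>lborel)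
      + (\<integral>\<^sup>+v. ennreal (std_normal_density v) * indicator {-b<..} v \<partial>lborel)"
    by (simp add: mult_2 nn_integral_std_normal_density_reflect[symmetric])
  also have "\<dots> = (\<integral>\<^sup>+v. ennreal (std_normal_density v) * (indicator {..<b} v + indicator {-b<..} v) \<partial>lborel)"
    by (subst nn_integral_add[symmetric]) (auto simp: distrib_left)
  finally show ?thesis .
qed

lemma nn_integral_twice_std_normal_density_negative: "(\<integral>\<^sup>+v. ennreal (2 * std_normal_density v) * indicator {..<0} v \<partial>lborel) = 1"
proof -
  have "(\<integral>\<^sup>+v. ennreal (std_normal_density v) * (indicator {..<0} v + indicator {-0<..} v) \<partial>lborel)
      = (\<integral>\<^sup>+v. ennreal (std_normal_density v) \<partial>lborel)"
    using AE_lborel_singleton[of 0] by (intro nn_integral_cong_AE) (auto elim!: eventually_mono simp: indicator_def)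
  also have "\<dots> = emeasure std_normal_distribution UNIV"
    by (simp add: emeasure_density)
  also have "\<dots> = 1"
    using prob_space.emeasure_space_1[OF prob_space_normal_density[of 1 0]] by simp
  finally show ?thesis by (simp only: nn_integral_twice_std_normal_density_lessThan)
qed

lemma emeasure_levy_law:
  "A \<in> sets borel \<Longrightarrow> emeasure levy_law A = (\<integral>\<^sup>+x. ennreal (levy_density x) * indicator A x \<partial>lborel)"
  unfolding levy_law_def by (simp add: emeasure_density)

lemma emeasure_levy_law_einterval:
  assumes "b \<le> 0" "0 \<le> B" and B: "((ereal \<circ> levy_map \<circ> real_of_ereal) \<longlongrightarrow> B) (at_left (ereal b))"
  shows "emeasure levy_law (einterval 0 B) = (\<integral>\<^sup>+v. ennreal (2 * std_normal_density v) * indicator {..<b} v \<partial>lborel)"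
proof -
  define f where "f u = levy_kernel u / sqrt (3 * pi)" for u
  note substitution = levy_kernel_integral_substitution[OF \<open>b \<le> 0\<close> B, folded f_def]
  have "einterval 0 B \<subseteq> {0<..}"
    by (auto simp: einterval_def zero_ereal_def)
  then have "emeasure levy_law (einterval 0 B) = (\<integral>\<^sup>+u. ennreal (f u) * indicator (einterval 0 B) u \<partial>lborel)"
    by (auto simp: emeasure_levy_law f_def levy_density_eq_kernel indicator_def intro!: nn_integral_cong)
  also have "\<dots> = ennreal (LINT u:einterval 0 B|lborel. f u)"
    using substitution(1) \<open>einterval 0 B \<subseteq> {0<..}\<close>
    by (intro ennreal_set_integral_eq_nn_integral[symmetric]) (auto simp: f_def levy_kernel_def)
  also have "(LINT u:einterval 0 B|lborel. f u) = (LINT v:{..<b}|lborel. 2 * std_normal_density v)"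
    using substitution(2) \<open>0 \<le> B\<close> by (simp add: interval_lebesgue_integral_def interval_lebesgue_integral_le_eq)
  also have "ennreal \<dots> = (\<integral>\<^sup>+v. ennreal (2 * std_normal_density v) * indicator {..<b} v \<partial>lborel)"
    by (intro ennreal_set_integral_eq_nn_integral set_integrable_std_normal_density) auto
  finally show ?thesis .
qed

lemma emeasure_levy_law_UNIV: "emeasure levy_law UNIV = 1"
proof -
  have "((ereal \<circ> levy_map \<circ> real_of_ereal) \<longlongrightarrow> \<infinity>) (at_left (ereal 0))"
    unfolding ereal_tendsto_simps using levy_map_at_left_0 .
  from emeasure_levy_law_einterval[OF _ _ this] have "emeasure levy_law (einterval 0 \<infinity>) = 1"
    using nn_integral_twice_std_normal_density_negative by simp
  moreover have "emeasure levy_law UNIV = emeasure levy_law (einterval 0 \<infinity>)"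
    by (auto simp: emeasure_levy_law einterval_def zero_ereal_def levy_density_def indicator_def intro!: nn_integral_cong)
  ultimately show ?thesis by simp
qed

lemma space_levy_law [simp]: "space levy_law = UNIV"
  by (simp add: levy_law_def)

lemma prob_space_levy_law: "prob_space levy_law"
  by (rule prob_spaceI) (simp add: emeasure_levy_law_UNIV)

interpretation levy: prob_space levy_law
  by (rule prob_space_levy_law)

lemma real_distribution_levy_law: "real_distribution levy_law"
  using prob_space_levy_law by (simp add: real_distribution_def real_distribution_axioms_def levy_law_def)

lemma emeasure_levy_law_atMost:
  assumes "x > 0"
  shows "emeasure levy_law {..x}
    = (\<integral>\<^sup>+v. ennreal (2 * std_normal_density v) * indicator {..< - sqrt (2 / (3 * x))} v \<partial>lborel)"
proof -
  define s where "s = sqrt (2 / (3 * x))"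
  have "s > 0" "levy_map (- s) = x"
    using assms by (simp_all add: s_def levy_map_def)
  moreover have "continuous (at (- s) within {..< - s}) levy_map"
    unfolding levy_map_def using \<open>s > 0\<close> by (intro continuous_intros) auto
  ultimately have "((ereal \<circ> levy_map \<circ> real_of_ereal) \<longlongrightarrow> ereal x) (at_left (ereal (- s)))"
    unfolding ereal_tendsto_simps by (simp add: continuous_within)
  from emeasure_levy_law_einterval[OF _ _ this] \<open>s > 0\<close> \<open>x > 0\<close>
  have "emeasure levy_law {0<..<x} = (\<integral>\<^sup>+v. ennreal (2 * std_normal_density v) * indicator {..< - s} v \<partial>lborel)"
    by (simp add: zero_ereal_def einterval_eq)
  moreover have "emeasure levy_law {..x} = emeasure levy_law {0<..<x}"
        using AE_lborel_singleton[of x]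
    by (auto simp: emeasure_levy_law levy_density_def indicator_def elim!: eventually_mono intro!: nn_integral_cong_AE)
  ultimately show ?thesis by (simp add: s_def)
qed

lemma borel_measurable_levy_map [measurable]: "levy_map \<in> borel_measurable borel"
  unfolding levy_map_def by measurable

lemma emeasure_distr_levy_map:
  "A \<in> sets borel \<Longrightarrow>
    emeasure (distr std_normal_distribution borel levy_map) A = (\<integral>\<^sup>+v. ennreal (std_normal_density v) * indicator (levy_map -` A) v \<partial>lborel)"
  by (subst emeasure_distr) (auto simp: emeasure_density vimage_def Int_def)

lemma emeasure_distr_levy_map_atMost:
  assumes "x > 0"
  shows "emeasure (distr std_normal_distribution borel levy_map) {..x}
    = (\<integral>\<^sup>+v. ennreal (2 * std_normal_density v) * indicator {..< - sqrt (2 / (3 * x))} v \<partial>lborel)"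
proof -
  define s where "s = sqrt (2 / (3 * x))"
  have "s > 0" "s ^ 2 = 2 / (3 * x)"
    using assms by (simp_all add: s_def)
  have crossing: "levy_map v \<le> x \<longleftrightarrow> v < - s \<or> v > s" if "v \<noteq> 0" "v \<noteq> s" "v \<noteq> - s" for v
  proof -
    have "levy_map v \<le> x \<longleftrightarrow> 2 / (3 * x) \<le> v ^ 2"
      using that assms by (simp add: levy_map_def field_simps)
    also have "\<dots> \<longleftrightarrow> s ^ 2 \<le> v ^ 2"
      using \<open>s ^ 2 = 2 / (3 * x)\<close> by simp
    also have "\<dots> \<longleftrightarrow> s \<le> \<bar>v\<bar>"
      using \<open>s > 0\<close> by (simp add: abs_le_square_iff[symmetric])
    finally show ?thesis using that by auto
  qed
  have "AE v in lborel. indicator (levy_map -` {..x}) v = (indicator {..< - s} v + indicator {- (- s)<..} v :: ennreal)"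
    using AE_lborel_singleton[of 0] AE_lborel_singleton[of s] AE_lborel_singleton[of "- s"]
    by eventually_elim (use crossing \<open>s > 0\<close> in \<open>auto simp: indicator_def\<close>)
  then have "emeasure (distr std_normal_distribution borel levy_map) {..x}
      = (\<integral>\<^sup>+v. ennreal (std_normal_density v) * (indicator {..< - s} v + indicator {- (- s)<..} v) \<partial>lborel)"
    by (auto simp: emeasure_distr_levy_map elim!: eventually_mono intro!: nn_integral_cong_AE)
  then show ?thesis
    by (simp only: nn_integral_twice_std_normal_density_lessThan s_def)
qed

theorem distr_std_normal_levy_map: "distr std_normal_distribution borel levy_map = levy_law"
proof (rule cdf_unique)
  show "real_distribution (distr std_normal_distribution borel levy_map)"
    by (intro prob_space.real_distribution_distr prob_space_normal_density) simp_all
  show "real_distribution levy_law" by (rule real_distribution_levy_law)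
  have "emeasure (distr std_normal_distribution borel levy_map) {..x} = emeasure levy_law {..x}" for x
  proof (cases "x > 0")
    case True
    then show ?thesis by (simp add: emeasure_distr_levy_map_atMost emeasure_levy_law_atMost)
  next
    case False
    have "AE v in lborel. ennreal (std_normal_density v) * indicator (levy_map -` {..x}) v = 0"
      using AE_lborel_singleton[of 0]
    proof eventually_elim
      case (elim v)
      then have "levy_map v > 0" by (simp add: levy_map_def)
      with False show ?case by (simp add: indicator_def)
    qed
    then have "emeasure (distr std_normal_distribution borel levy_map) {..x} = 0"
      by (simp add: emeasure_distr_levy_map nn_integral_0_iff_AE)
    moreover have "emeasure levy_law {..x} = 0"
    proof -
      have zero: "ennreal (levy_density y) * indicator {..x} y = 0" for y
        using False by (simp add: levy_density_def indicator_def)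
      show ?thesis unfolding emeasure_levy_law[OF atMost_borel] zero by simp
    qed
    ultimately show ?thesis by simp
  qed
  then show "cdf (distr std_normal_distribution borel levy_map) = cdf levy_law"
    by (simp add: cdf_def measure_def fun_eq_iff)
qed

section \<open>Sums as integrals of step functions\<close>

lemma nn_integral_ceiling_step:
  fixes a :: "nat \<Rightarrow> real"
  assumes "c > 0" "\<And>n. a n \<ge> 0"
  shows "(\<integral>\<^sup>+y. ennreal (c * a (nat \<lceil>c * y\<rceil>)) * indicator {0<..} y \<partial>lborel) = (\<Sum>n. ennreal (a (Suc n)))"
proof -
  define I where "I n = {real n / c <.. real (Suc n) / c}" for n
  have step: "ennreal (c * a (nat \<lceil>c * y\<rceil>)) * indicator {0<..} y = (\<Sum>n. ennreal (c * a (Suc n)) * indicator (I n) y)" for y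
  proof (cases "y > 0")
    case False
    have "indicator (I n) y = (0 :: ennreal)" for n
    proof -
      have "real n / c \<ge> 0" using \<open>c > 0\<close> by simp
      with False show ?thesis by (simp add: I_def indicator_def)
    qed
    with False show ?thesis by simp
  next
    case True
    define k where "k = nat \<lceil>c * y\<rceil>"
    have "c * y > 0" using \<open>c > 0\<close> True by simp
    then have "k \<ge> 1" unfolding k_def by linarith
    have ind: "indicator (I n) y = (if n = k - 1 then 1 else 0 :: ennreal)" for n
    proof -
      have "y \<in> I n \<longleftrightarrow> real n < c * y \<and> c * y \<le> real n + 1"
        using \<open>c > 0\<close> by (simp add: I_def field_simps)
      also have "\<dots> \<longleftrightarrow> \<lceil>c * y\<rceil> = int n + 1"
        by (simp add: ceiling_eq_iff)
      also have "\<dots> \<longleftrightarrow> n = k - 1"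
        using \<open>c * y > 0\<close> \<open>k \<ge> 1\<close> k_def by linarith
      finally show ?thesis by (simp add: indicator_def)
    qed
    have "(\<Sum>n. ennreal (c * a (Suc n)) * indicator (I n) y) = (\<Sum>n. if n = k - 1 then ennreal (c * a (Suc n)) else 0)"
      unfolding ind by (simp add: if_distrib cong: if_cong)
    also have "\<dots> = ennreal (c * a k)"
      using \<open>k \<ge> 1\<close> by (subst suminf_finite[of "{k - 1}"]) auto
    finally show ?thesis using True by (simp add: k_def)
  qed
  have "(\<integral>\<^sup>+y. ennreal (c * a (nat \<lceil>c * y\<rceil>)) * indicator {0<..} y \<partial>lborel)
      = (\<Sum>n. \<integral>\<^sup>+y. ennreal (c * a (Suc n)) * indicator (I n) y \<partial>lborel)"
    unfolding step by (rule nn_integral_suminf) (auto simp: I_def)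
  also have "\<dots> = (\<Sum>n. ennreal (a (Suc n)))"
  proof (rule suminf_cong)
    fix n
    have "real n / c \<le> real (Suc n) / c" "real (Suc n) / c - real n / c = 1 / c"
      using \<open>c > 0\<close> by (simp_all add: divide_right_mono diff_divide_distrib[symmetric])
    then show "(\<integral>\<^sup>+y. ennreal (c * a (Suc n)) * indicator (I n) y \<partial>lborel) = ennreal (a (Suc n))"
      using \<open>c > 0\<close> assms(2)[of "Suc n"]
      by (simp add: I_def nn_integral_cmult_indicator emeasure_lborel_Ioc ennreal_mult'[symmetric])
  qed
  finally show ?thesis .
qed

text \<open>A sum \<open>\<Sum>n. a n\<close> with \<open>a 0 = 0\<close> is the integral over \<open>{0<..}\<close> of the step function
  \<open>y \<mapsto> s * a \<lceil>s * y\<rceil>\<close>, so dominated convergence of the step functions gives convergence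
  of the sums.\<close>
lemma step_sums_tendsto:
  fixes a :: "nat \<Rightarrow> nat \<Rightarrow> real" and s :: "nat \<Rightarrow> real" and f :: "real \<Rightarrow> real" and g :: "real \<Rightarrow> ennreal"
  assumes nonneg: "\<And>m n. a m n \<ge> 0" and zero: "\<And>m. a m 0 = 0"
    and scale: "eventually (\<lambda>m. s m > 0) sequentially"
    and [measurable]: "f \<in> borel_measurable borel" "g \<in> borel_measurable borel"
    and integrable: "(\<integral>\<^sup>+y. g y \<partial>lborel) < \<infinity>"
    and dominated: "\<And>m y. y > 0 \<Longrightarrow> ennreal (s m * a m (nat \<lceil>s m * y\<rceil>)) \<le> g y"
    and pointwise: "AE y in lborel. y > 0 \<longrightarrow> (\<lambda>m. s m * a m (nat \<lceil>s m * y\<rceil>)) \<longlonglongrightarrow> f y"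
  shows "eventually (\<lambda>m. summable (a m)) sequentially"
    and "(\<lambda>m. ennreal (\<Sum>n. a m n)) \<longlonglongrightarrow> (\<integral>\<^sup>+y. ennreal (f y) * indicator {0<..} y \<partial>lborel)"
proof -
  define step where "step m y = ennreal (s m * a m (nat \<lceil>s m * y\<rceil>)) * indicator {0<..} y" for m y
  have sum_eq_step: "summable (a m) \<and> ennreal (\<Sum>n. a m n) = (\<integral>\<^sup>+y. step m y \<partial>lborel)" if "s m > 0" for m
  proof -
    have "(\<integral>\<^sup>+y. step m y \<partial>lborel) = (\<Sum>n. ennreal (a m (Suc n)))"
      unfolding step_def using that nonneg by (rule nn_integral_ceiling_step)
    moreover have "(\<integral>\<^sup>+y. step m y \<partial>lborel) \<le> (\<integral>\<^sup>+y. g y \<partial>lborel)"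
      using dominated by (intro nn_integral_mono) (simp add: step_def indicator_def)
    ultimately have "summable (\<lambda>n. a m (Suc n))"
      using integrable nonneg by (intro summable_suminf_not_top) (auto simp: top_unique)
    then have "summable (a m)" by (simp add: summable_Suc_iff)
    moreover have "ennreal (\<Sum>n. a m n) = (\<Sum>n. ennreal (a m (Suc n)))"
      using \<open>summable (\<lambda>n. a m (Suc n))\<close> \<open>summable (a m)\<close> nonneg zero
      by (simp add: suminf_split_head suminf_ennreal2)
    ultimately show ?thesis
      using \<open>(\<integral>\<^sup>+y. step m y \<partial>lborel) = (\<Sum>n. ennreal (a m (Suc n)))\<close> by simp
  qed
  then show "eventually (\<lambda>m. summable (a m)) sequentially"
    using scale by (auto elim: eventually_mono)
  have "(\<lambda>m. \<integral>\<^sup>+y. step m y \<partial>lborel) \<longlonglongrightarrow> (\<integral>\<^sup>+y. ennreal (f y) * indicator {0<..} y \<partial>lborel)"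
  proof (rule nn_integral_dominated_convergence[where w = g])
    show "AE y in lborel. step m y \<le> g y" for m
      using dominated by (simp add: step_def indicator_def)
    show "AE y in lborel. (\<lambda>m. step m y) \<longlonglongrightarrow> ennreal (f y) * indicator {0<..} y"
      using pointwise
    proof eventually_elim
      case (elim y)
      show ?case
      proof (cases "y > 0")
        case True
        then show ?thesis using elim by (simp add: step_def tendsto_ennrealI)
      qed (simp add: step_def)
    qed
  qed (use integrable in \<open>auto simp: step_def\<close>)
  moreover have "eventually (\<lambda>m. (\<integral>\<^sup>+y. step m y \<partial>lborel) = ennreal (\<Sum>n. a m n)) sequentially"
    using scale by eventually_elim (simp add: sum_eq_step)
  ultimately show "(\<lambda>m. ennreal (\<Sum>n. a m n)) \<longlonglongrightarrow> (\<integral>\<^sup>+y. ennreal (f y) * indicator {0<..} y \<partial>lborel)"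
    by (rule Lim_transform_eventually)
qed

lemma ceiling_square_bounds:
  assumes "y > 0"
  shows "real m ^ 2 * y \<le> real (nat \<lceil>real m ^ 2 * y\<rceil>)" "real (nat \<lceil>real m ^ 2 * y\<rceil>) \<le> real m ^ 2 * y + 1"
  using assms of_int_ceiling_le_add_one[of "real m ^ 2 * y"] by (auto intro: order_trans[OF le_of_int_ceiling])

lemma ceiling_square_ratio_tendsto:
  assumes "y > 0"
  shows "(\<lambda>m. real (nat \<lceil>real m ^ 2 * y\<rceil>) / real m ^ 2) \<longlonglongrightarrow> y"
proof (rule tendsto_sandwich)
  show "eventually (\<lambda>m. y \<le> real (nat \<lceil>real m ^ 2 * y\<rceil>) / real m ^ 2) sequentially"
    using eventually_ge_at_top[of "1::nat"]
    by eventually_elim (use ceiling_square_bounds[OF assms] in \<open>simp add: field_simps\<close>)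
  show "eventually (\<lambda>m. real (nat \<lceil>real m ^ 2 * y\<rceil>) / real m ^ 2 \<le> y + 1 / real m ^ 2) sequentially"
    using eventually_ge_at_top[of "1::nat"]
    by eventually_elim (use ceiling_square_bounds[OF assms] in \<open>simp add: field_simps\<close>)
  show "(\<lambda>m. y + 1 / real m ^ 2) \<longlonglongrightarrow> y"
    using tendsto_add[OF tendsto_const lim_1_over_square, of y] by simp
qed simp

lemma rescaled_weight_dominated:
  assumes "y > 0"
  shows "ennreal (rescaled_weight m (nat \<lceil>real m ^ 2 * y\<rceil>))
    \<le> ennreal (5 * inner_const) * indicator {0<..1} y
      + ennreal (inner_const * sqrt (3 * pi)) * (ennreal (levy_density y) * indicator {1<..} y)"
proof (cases "m = 0")
  case True
  then show ?thesis by (simp add: rescaled_weight_def)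
next
  case False
  define n where "n = nat \<lceil>real m ^ 2 * y\<rceil>"
  have "real m ^ 2 * y \<le> real n" using ceiling_square_bounds(1)[OF assms] by (simp add: n_def)
  moreover have "real m ^ 2 * y > 0" using False assms by simp
  ultimately have "m \<ge> 1" "n \<ge> 1" using False by linarith+
  show ?thesis
  proof (cases "y \<le> 1")
    case True
    have "ennreal (rescaled_weight m n) \<le> ennreal (5 * inner_const)"
      using rescaled_weight_le_const[OF \<open>m \<ge> 1\<close> \<open>n \<ge> 1\<close>] by (rule ennreal_leI)
    with True assms show ?thesis by (simp add: n_def)
  next
    case False
    have "rescaled_weight m n \<le> inner_const * sqrt (3 * pi) * levy_density y"
      using rescaled_weight_le_kernel[OF \<open>m \<ge> 1\<close> _ \<open>real m ^ 2 * y \<le> real n\<close>] False assms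
      by (simp add: levy_density_eq_kernel)
    then have "ennreal (rescaled_weight m n) \<le> ennreal (inner_const * sqrt (3 * pi)) * ennreal (levy_density y)"
      using inner_const_pos levy_density_nonneg by (simp add: ennreal_leI ennreal_mult[symmetric])
    with False show ?thesis by (simp add: n_def)
  qed
qed

lemma levy_majorant_finite:
  "(\<integral>\<^sup>+y. ennreal (5 * inner_const) * indicator {0<..1} y
      + ennreal (inner_const * sqrt (3 * pi)) * (ennreal (levy_density y) * indicator {1<..} y) \<partial>lborel) < \<infinity>"
proof -
  have "emeasure levy_law {1<..} < \<top>"
    by (simp add: less_top[symmetric])
  then have "ennreal (inner_const * sqrt (3 * pi)) * emeasure levy_law {1<..} < \<infinity>"
    by (simp add: ennreal_mult_less_top less_top)
  then show ?thesis
    by (simp add: nn_integral_add nn_integral_cmult emeasure_levy_law[symmetric] ennreal_mult_less_top)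
qed

lemma size_weight_zero [simp]: "size_weight m 0 = 0"
  by (simp add: size_weight_def)

lemma nn_integral_levy_density_cmult:
  assumes "L \<in> sets borel" "K \<ge> 0"
  shows "(\<integral>\<^sup>+y. ennreal (K * levy_density y * indicator L y) * indicator {0<..} y \<partial>lborel)
    = ennreal (K * measure levy_law L)"
proof -
  have "ennreal (K * levy_density y * indicator L y) * indicator {0<..} y = ennreal K * (ennreal (levy_density y) * indicator L y)" for y
    using assms(2) by (cases "y > 0") (auto simp: levy_density_def indicator_def ennreal_mult[symmetric])
  then have "(\<integral>\<^sup>+y. ennreal (K * levy_density y * indicator L y) * indicator {0<..} y \<partial>lborel) = ennreal K * emeasure levy_law L"
    using assms(1) by (simp add: nn_integral_cmult emeasure_levy_law)
  also have "\<dots> = ennreal (K * measure levy_law L)"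
    using assms(2) by (simp add: levy.emeasure_eq_measure ennreal_mult)
  finally show ?thesis .
qed

lemma size_weight_sums_tendsto:
  fixes S :: "nat \<Rightarrow> nat set" and L :: "real set"
  assumes [measurable]: "L \<in> sets borel"
    and events: "AE y in lborel. y > 0 \<longrightarrow> eventually (\<lambda>m. nat \<lceil>real m ^ 2 * y\<rceil> \<in> S m \<longleftrightarrow> y \<in> L) sequentially"
  shows "eventually (\<lambda>m. summable (\<lambda>n. size_weight m n * indicator (S m) n)) sequentially"
    and "(\<lambda>m. real m / boundary_weight m * (\<Sum>n. size_weight m n * indicator (S m) n))
      \<longlonglongrightarrow> inner_const / 2 * sqrt (3 * pi) * measure levy_law L"
proof -
  define K where "K = inner_const / 2 * sqrt (3 * pi)"
  define a where "a m n = real m / boundary_weight m * (size_weight m n * indicator (S m) n)" for m n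
  define f where "f y = K * levy_density y * indicator L y" for y
  have scaled: "real m ^ 2 * a m n = rescaled_weight m n * indicator (S m) n" for m n
    by (simp add: a_def rescaled_weight_def power2_eq_square power3_eq_cube)
  have a_nonneg: "a m n \<ge> 0" for m n
    using size_weight_nonneg boundary_weight_pos[of m] by (simp add: a_def)
  have "(\<lambda>m. real m ^ 2 * a m (nat \<lceil>real m ^ 2 * y\<rceil>)) \<longlonglongrightarrow> f y"
    if "y > 0" "eventually (\<lambda>m. nat \<lceil>real m ^ 2 * y\<rceil> \<in> S m \<longleftrightarrow> y \<in> L) sequentially" for y
  proof -
    have "(\<lambda>m. rescaled_weight m (nat \<lceil>real m ^ 2 * y\<rceil>) * indicator L y) \<longlonglongrightarrow> inner_const / 2 * levy_kernel y * indicator L y"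
      by (intro tendsto_mult_right rescaled_weight_tendsto ceiling_square_ratio_tendsto \<open>y > 0\<close>)
    moreover have "inner_const / 2 * levy_kernel y * indicator L y = f y"
      using \<open>y > 0\<close> by (simp add: f_def K_def levy_density_eq_kernel)
    moreover have "eventually (\<lambda>m. rescaled_weight m (nat \<lceil>real m ^ 2 * y\<rceil>) * indicator L y
        = real m ^ 2 * a m (nat \<lceil>real m ^ 2 * y\<rceil>)) sequentially"
      using that(2) by eventually_elim (simp add: scaled indicator_def)
    ultimately show ?thesis by (simp add: Lim_transform_eventually)
  qed
  then have pointwise: "AE y in lborel. y > 0 \<longrightarrow> (\<lambda>m. real m ^ 2 * a m (nat \<lceil>real m ^ 2 * y\<rceil>)) \<longlonglongrightarrow> f y"
    using events by (auto elim: AE_mp)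
  have dominated: "ennreal (real m ^ 2 * a m (nat \<lceil>real m ^ 2 * y\<rceil>))
      \<le> ennreal (5 * inner_const) * indicator {0<..1} y
        + ennreal (inner_const * sqrt (3 * pi)) * (ennreal (levy_density y) * indicator {1<..} y)" if "y > 0" for m y
  proof -
    have "ennreal (rescaled_weight m n * indicator (S m) n) \<le> ennreal (rescaled_weight m n)" for n
      using rescaled_weight_nonneg[of m n] by (intro ennreal_leI) (simp add: indicator_def)
    then show ?thesis
      unfolding scaled using rescaled_weight_dominated[OF that, of m] by (rule order_trans)
  qed
  have "eventually (\<lambda>m. real m ^ 2 > (0::real)) sequentially"
    using eventually_gt_at_top[of 0] by eventually_elim simp
  moreover have "a m 0 = 0" for m
    by (simp add: a_def)
  moreover have "f \<in> borel_measurable borel"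
    unfolding f_def by measurable
  moreover have "(\<lambda>y. ennreal (5 * inner_const) * indicator {0<..1} y
      + ennreal (inner_const * sqrt (3 * pi)) * (ennreal (levy_density y) * indicator {1<..} y)) \<in> borel_measurable borel"
    by measurable
  ultimately have sums:
    "eventually (\<lambda>m. summable (a m)) sequentially"
    "(\<lambda>m. ennreal (\<Sum>n. a m n)) \<longlonglongrightarrow> ennreal (K * measure levy_law L)"
    using step_sums_tendsto[OF a_nonneg _ _ _ _ levy_majorant_finite dominated pointwise]
      nn_integral_levy_density_cmult[of L K] inner_const_pos
    by (auto simp: f_def K_def)
  show summable: "eventually (\<lambda>m. summable (\<lambda>n. size_weight m n * indicator (S m) n)) sequentially"
    using sums(1) eventually_gt_at_top[of 0]
  proof eventually_elim
    case (elim m)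
    then show ?case
      using boundary_weight_pos[of m] by (simp add: a_def[abs_def] summable_cmult_iff)
  qed
  have "(\<lambda>m. \<Sum>n. a m n) \<longlonglongrightarrow> K * measure levy_law L"
    using sums a_nonneg inner_const_pos
    by (intro tendsto_ennrealD) (auto simp: K_def elim!: eventually_mono intro: suminf_nonneg)
  moreover have "eventually (\<lambda>m. (\<Sum>n. a m n) = real m / boundary_weight m * (\<Sum>n. size_weight m n * indicator (S m) n)) sequentially"
    using summable by eventually_elim (simp only: a_def suminf_mult)
  ultimately show "(\<lambda>m. real m / boundary_weight m * (\<Sum>n. size_weight m n * indicator (S m) n))
      \<longlonglongrightarrow> inner_const / 2 * sqrt (3 * pi) * measure levy_law L"
    unfolding K_def by (rule Lim_transform_eventually)
qed

section \<open>Convergence of the size law\<close>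

lemma measure_density_count_space_nat:
  fixes w :: "nat \<Rightarrow> real"
  assumes "summable w" "\<And>n. w n \<ge> 0"
  shows "measure (density (count_space UNIV) (\<lambda>n. ennreal (w n / suminf w))) A = (\<Sum>n. w n * indicator A n) / suminf w"
proof -
  define v where "v n = w n * indicator A n / suminf w" for n
  have "suminf w \<ge> 0" using assms by (rule suminf_nonneg)
  then have "v n \<ge> 0" for n using assms(2) by (simp add: v_def)
  have bound: "norm (w n * indicator A n) \<le> w n" for n
    using assms(2)[of n] by (simp add: indicator_def)
  have "summable (\<lambda>n. w n * indicator A n)"
    by (rule summable_comparison_test'[OF assms(1), of 0]) (rule bound)
  then have "summable v" unfolding v_def by (rule summable_divide)
  have "ennreal (w n / suminf w) * indicator A n = ennreal (v n)" for n
    by (simp add: v_def indicator_def)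
  then have "emeasure (density (count_space UNIV) (\<lambda>n. ennreal (w n / suminf w))) A = (\<Sum>n. ennreal (v n))"
    by (simp add: emeasure_density nn_integral_count_space_nat)
  also have "\<dots> = ennreal (\<Sum>n. v n)"
    by (rule suminf_ennreal2[OF \<open>\<And>n. v n \<ge> 0\<close> \<open>summable v\<close>])
  finally have "measure (density (count_space UNIV) (\<lambda>n. ennreal (w n / suminf w))) A = (\<Sum>n. v n)"
    using \<open>summable v\<close> \<open>\<And>n. v n \<ge> 0\<close> by (simp add: measure_def suminf_nonneg)
  also have "\<dots> = (\<Sum>n. w n * indicator A n) / suminf w"
    unfolding v_def using \<open>summable (\<lambda>n. w n * indicator A n)\<close> by (rule suminf_divide)
  finally show ?thesis .
qed

lemma size_law_eq_density: "size_law m = density (count_space UNIV) (\<lambda>n. ennreal (size_weight m n / suminf (size_weight m)))"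
  unfolding size_law_def Zt_def size_weight_def ..

lemma size_law_tendsto:
  fixes S :: "nat \<Rightarrow> nat set" and L :: "real set"
  assumes "L \<in> sets borel"
    and events: "AE y in lborel. y > 0 \<longrightarrow> eventually (\<lambda>m. nat \<lceil>real m ^ 2 * y\<rceil> \<in> S m \<longleftrightarrow> y \<in> L) sequentially"
  shows "(\<lambda>m. measure (size_law m) (S m)) \<longlonglongrightarrow> measure levy_law L"
proof -
  define K where "K = inner_const / 2 * sqrt (3 * pi)"
  define c where "c m = real m / boundary_weight m" for m
  note part = size_weight_sums_tendsto[OF assms, folded c_def K_def]
  have total: "eventually (\<lambda>m. summable (size_weight m)) sequentially"
    "(\<lambda>m. c m * suminf (size_weight m)) \<longlonglongrightarrow> K * measure levy_law UNIV"
    using size_weight_sums_tendsto[of UNIV "\<lambda>_. UNIV"] by (simp_all add: c_def K_def)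
  have "measure levy_law UNIV = 1"
    using levy.prob_space by simp
  have "(\<lambda>m. (c m * (\<Sum>n. size_weight m n * indicator (S m) n)) / (c m * suminf (size_weight m)))
      \<longlonglongrightarrow> (K * measure levy_law L) / (K * measure levy_law UNIV)"
    using part(2) total(2) inner_const_pos \<open>measure levy_law UNIV = 1\<close> by (intro tendsto_divide) (auto simp: K_def)
  moreover have "eventually (\<lambda>m. (c m * (\<Sum>n. size_weight m n * indicator (S m) n)) / (c m * suminf (size_weight m))
      = measure (size_law m) (S m)) sequentially"
    using total(1) eventually_gt_at_top[of 0]
  proof eventually_elim
    case (elim m)
    then have "c m > 0" using boundary_weight_pos[of m] by (simp add: c_def)
    with elim show ?case
      by (simp add: size_law_eq_density measure_density_count_space_nat size_weight_nonneg)
  qed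
  ultimately show ?thesis
    using inner_const_pos \<open>measure levy_law UNIV = 1\<close> by (simp add: K_def Lim_transform_eventually)
qed

lemma eventually_ceiling_square_le_iff:
  assumes "y > 0" "y \<noteq> x"
  shows "eventually (\<lambda>m. real (nat \<lceil>real m ^ 2 * y\<rceil>) \<le> x * real m ^ 2 \<longleftrightarrow> y \<le> x) sequentially"
proof (cases "y < x")
  case True
  show ?thesis
    using order_tendstoD(2)[OF ceiling_square_ratio_tendsto[OF \<open>y > 0\<close>] True] eventually_gt_at_top[of 0]
    by eventually_elim (use True in \<open>simp add: field_simps\<close>)
next
  case False
  with assms have "x < y" by simp
  show ?thesis
    using order_tendstoD(1)[OF ceiling_square_ratio_tendsto[OF \<open>y > 0\<close>] \<open>x < y\<close>] eventually_gt_at_top[of 0]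
    by eventually_elim (use \<open>x < y\<close> in \<open>simp add: field_simps\<close>)
qed

lemma AE_eventually_ceiling_square_le_iff:
  "AE y in lborel. y > 0 \<longrightarrow> eventually (\<lambda>m. real (nat \<lceil>real m ^ 2 * y\<rceil>) \<le> x * real m ^ 2 \<longleftrightarrow> y \<le> x) sequentially"
  using AE_lborel_singleton[of x]
proof eventually_elim
  case (elim y)
  then show ?case using eventually_ceiling_square_le_iff[of y x] by blast
qed

lemma weak_conv_scaled_size_law: "weak_conv_m scaled_size_law levy_law"
  unfolding weak_conv_m_def weak_conv_def
proof (intro allI impI)
  fix x :: real
  have "(\<lambda>m. measure (size_law m) {n. real n \<le> x * real m ^ 2}) \<longlonglongrightarrow> measure levy_law {..x}"
    using AE_eventually_ceiling_square_le_iff[of x] by (intro size_law_tendsto) auto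
  moreover have "eventually (\<lambda>m. measure (size_law m) {n. real n \<le> x * real m ^ 2} = cdf (scaled_size_law m) x) sequentially"
    using eventually_gt_at_top[of 0]
  proof eventually_elim
    case (elim m)
    have "cdf (scaled_size_law m) x = measure (size_law m) ((\<lambda>n. real n / real m ^ 2) -` {..x} \<inter> space (size_law m))"
      unfolding cdf_def scaled_size_law_def by (rule measure_distr) (auto simp: size_law_def)
    also have "(\<lambda>n. real n / real m ^ 2) -` {..x} \<inter> space (size_law m) = {n. real n \<le> x * real m ^ 2}"
      using elim by (auto simp: size_law_def divide_le_eq)
    finally show ?case by simp
  qed
  ultimately show "(\<lambda>m. cdf (scaled_size_law m) x) \<longlonglongrightarrow> cdf levy_law x"
    by (simp add: cdf_def Lim_transform_eventually)
qed

lemma levy_law_tail: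
  assumes "t > 0"
  shows "measure levy_law {t<..} = 1 / sqrt (3 * pi) * (LBINT x:{t<..}. x powr (-3/2) * exp (- 1 / (3 * x)))"
proof -
  have "integrable lborel levy_density"
    using emeasure_levy_law[of UNIV] emeasure_levy_law_UNIV levy_density_nonneg
    by (intro integrableI_nn_integral_finite[where x = 1]) auto
  then have "set_integrable lborel {t<..} levy_density"
    unfolding set_integrable_def by (intro integrable_mult_indicator) auto
  then have "emeasure levy_law {t<..} = ennreal (LINT x:{t<..}|lborel. levy_density x)"
    by (simp add: emeasure_levy_law ennreal_set_integral_eq_nn_integral levy_density_nonneg)
  moreover have "(LINT x:{t<..}|lborel. levy_density x) \<ge> 0"
    unfolding set_lebesgue_integral_def by (intro integral_nonneg_AE) (simp add: levy_density_nonneg)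
  ultimately have "measure levy_law {t<..} = (LINT x:{t<..}|lborel. levy_density x)"
    by (simp add: levy.emeasure_eq_measure)
  also have "\<dots> = (LINT x:{t<..}|lborel. 1 / sqrt (3 * pi) * (x powr (-3/2) * exp (- 1 / (3 * x))))"
    using assms by (intro set_lebesgue_integral_cong) (auto simp: levy_density_def)
  finally show ?thesis by (simp add: set_integral_mult_right)
qed

lemma size_law_tail_tendsto:
  assumes "t > 0"
  shows "(\<lambda>m. measure (size_law m) {n. real n > t * real m ^ 2})
    \<longlonglongrightarrow> 1 / sqrt (3 * pi) * (LBINT x:{t<..}. x powr (-3/2) * exp (- 1 / (3 * x)))"
proof -
  have "AE y in lborel. y > 0 \<longrightarrow> eventually (\<lambda>m. real (nat \<lceil>real m ^ 2 * y\<rceil>) > t * real m ^ 2 \<longleftrightarrow> y > t) sequentially"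
    using AE_eventually_ceiling_square_le_iff[of t] by eventually_elim (auto elim: eventually_mono)
  then have "(\<lambda>m. measure (size_law m) {n. real n > t * real m ^ 2}) \<longlonglongrightarrow> measure levy_law {t<..}"
    by (intro size_law_tendsto) auto
  then show ?thesis
    unfolding levy_law_tail[OF assms] .
qed

theorem proposition6p3:
  shows "weak_conv_m scaled_size_law levy_law
    \<and> distr (density lborel (\<lambda>g. ennreal (std_normal_density g))) borel
          (\<lambda>g. 2 / (3 * g ^ 2)) = levy_law
    \<and> (\<forall>t::real. t > 0 \<longrightarrow>
         (\<lambda>m. measure (size_law m) {n. real n > t * real m ^ 2})
         \<longlonglongrightarrow> 1 / sqrt (3 * pi) * (LBINT x:{t<..}. x powr (-3/2) * exp (- 1 / (3 * x))))"
  using weak_conv_scaled_size_law distr_std_normal_levy_map size_law_tail_tendsto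
  by (simp add: levy_map_def[abs_def])

end
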